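(* Let $C_0^2=3009$. Fix integers $1\le L_0\le K_0\le n$, integers $1\le L\le K\le n$, and a constant $s_0>0$. Let $$\mathcal S=\Big\{P\in\mathcal N(n,K,L):\ \|P-P_*\|_F\ge C_0\,2^{s_0}\sqrt{\tau(n,K_0,L_0)}\Big\}.$$ Then $$\mathbb P\Big\{\sup_{P\in\mathcal S}\Big[2\langle\Xi,P-P_*\rangle-\tfrac12\|P-P_*\|_F^2-2\Delta(n,K,L)\Big]\ge 0\Big\}\le\log_2 n\cdot\exp\big(-n\cdot 2^{2s_0-7}\big).$$
   Context: Network model: $n\ge 2$ nodes; $P_*\in[0,1]^{n\times n}$ is symmetric; $A\in\{0,1\}^{n\times n}$ is symmetric with entries $A_{ij}$, $1\le i\le j\le n$, independent, $A_{ij}\sim\mathrm{Bernoulli}((P_* )_{ij})$, and $A_{ji}=A_{ij}$. Notation: - $\Xi=A-P_*$. - $\langle M,N\rangle=\mathrm{Tr}(M^TN)$. - $\tau(n,K,L)=n\ln K+K\ln L+(K^2+2nL)\ln(9nL)$. - $\Delta(n,K,L)=C_0^2\,\tau(n,K,L)+n$. Nested Block Model class: for integers $1\le L\le K\le n$, $\mathcal N(n,K,L)$ is the set of matrices $P\in[0,1]^{n\times n}$ for which there exist a clustering function $z:\{1,\dots,n\}\to\{1,\dots,K\}$, a clustering function $c:\{1,\dots,K\}\to\{1,\dots,L\}$, a matrix $B\in[0,1]^{K\times K}$ and a matrix $H\in\mathbb R_+^{n\times L}$ such that, with $n_k=\#\{i:z(i)=k\}$, $$\sum_{i:\,z(i)=k}H_{i,l}=n_k\quad\text{for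 all }k\le K,\ l\le L,$$ and $$P_{ij}=B_{z(i),z(j)}\,H_{i,c(z(j))}\,H_{j,c(z(i))}\quad\text{for all }i,j.$$ *)

theory Defs
  imports "HOL-Probability.Probability"
begin

text \<open>Matrices are functions nat => nat => real; only indices 0..<n are relevant
  (nodes are indexed 0..n-1, communities 0..K-1 and 0..L-1).\<close>

definition edge_pmf :: "nat \<Rightarrow> (nat \<Rightarrow> nat \<Rightarrow> real) \<Rightarrow> ((nat \<times> nat) \<Rightarrow> bool) pmf" where
  "edge_pmf n Ps = Pi_pmf {(i, j). i \<le> j \<and> j < n} False (\<lambda>(i, j). bernoulli_pmf (Ps i j))"

definition adj_of :: "nat \<Rightarrow> ((nat \<times> nat) \<Rightarrow> bool) \<Rightarrow> (nat \<Rightarrow> nat \<Rightarrow> real)" where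
  "adj_of n X = (\<lambda>i j. if i < n \<and> j < n then
       (if i \<le> j then (if X (i, j) then 1 else 0) else (if X (j, i) then 1 else 0)) else 0)"

definition adj_pmf :: "nat \<Rightarrow> (nat \<Rightarrow> nat \<Rightarrow> real) \<Rightarrow> (nat \<Rightarrow> nat \<Rightarrow> real) pmf" where
  "adj_pmf n Ps = map_pmf (adj_of n) (edge_pmf n Ps)"

definition frob :: "nat \<Rightarrow> (nat \<Rightarrow> nat \<Rightarrow> real) \<Rightarrow> real" where
  "frob n M = sqrt (\<Sum>i<n. \<Sum>j<n. (M i j)\<^sup>2)"

definition minner :: "nat \<Rightarrow> (nat \<Rightarrow> nat \<Rightarrow> real) \<Rightarrow> (nat \<Rightarrow> nat \<Rightarrow> real) \<Rightarrow> real" where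
  "minner n M N = (\<Sum>i<n. \<Sum>j<n. M i j * N i j)"

definition tau :: "nat \<Rightarrow> nat \<Rightarrow> nat \<Rightarrow> real" where
  "tau n K L = real n * ln (real K) + real K * ln (real L)
     + (real K ^ 2 + 2 * real n * real L) * ln (9 * real n * real L)"

definition C0sq :: real where "C0sq = 3009"

definition Delta :: "nat \<Rightarrow> nat \<Rightarrow> nat \<Rightarrow> real" where
  "Delta n K L = C0sq * tau n K L + real n"

definition NBM :: "nat \<Rightarrow> nat \<Rightarrow> nat \<Rightarrow> (nat \<Rightarrow> nat \<Rightarrow> real) set" where
  "NBM n K L = {P. (\<forall>i<n. \<forall>j<n. 0 \<le> P i j \<and> P i j \<le> 1) \<and>
     (\<exists>(z :: nat \<Rightarrow> nat) (c :: nat \<Rightarrow> nat) (B :: nat \<Rightarrow> nat \<Rightarrow> real) (H :: nat \<Rightarrow> nat \<Rightarrow> real).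
        (\<forall>i<n. z i < K) \<and> (\<forall>k<K. c k < L) \<and>
        (\<forall>k<K. \<forall>k'<K. 0 \<le> B k k' \<and> B k k' \<le> 1) \<and>
        (\<forall>i<n. \<forall>l<L. 0 \<le> H i l) \<and>
        (\<forall>k<K. \<forall>l<L. (\<Sum>i\<in>{i. i < n \<and> z i = k}. H i l) = real (card {i. i < n \<and> z i = k})) \<and>
        (\<forall>i<n. \<forall>j<n. P i j = B (z i) (z j) * H i (c (z j)) * H j (c (z i))))}"

end

theory Submission
  imports Defs
begin

text \<open>Every \<open>P\<close> in the nested block model factors as
  \<open>P i j = \<beta> (z i, z j) * h (i, c (z j)) * h (j, c (z i))\<close> with all factors in \<open>[0, 1]\<close>, so rounding
  the factors down to the grid of mesh \<open>1 / n\<^sup>2\<close> moves each entry by at most \<open>3 / n\<^sup>2\<close> and yields a net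
  of at most \<open>exp (2 * tau n K L)\<close> matrices. If the supremum is nonnegative, a near-maximiser \<open>P\<close> with
  \<open>R \<le> ||P - P*||\<close> has a net point \<open>Q\<close> with \<open>R\<^sup>2 - 6 \<le> ||Q - P*||\<^sup>2\<close> and
  \<open><A - P*, Q - P*> \<ge> ||Q - P*||\<^sup>2 / 4 + Delta - 5\<close>. Over the edges \<open>i \<le> j\<close> this inner product is a
  sum of independent bounded terms, so by Hoeffding's inequality the event has probability at most
  \<open>exp (- (R\<^sup>2 - 6) / 16 - (Delta - 5) / 2)\<close>, and the union bound over the net costs a factor
  \<open>exp (2 * tau) \<le> exp ((Delta - 5) / 2)\<close>. The resulting \<open>exp (- (R\<^sup>2 - 6) / 16)\<close> is already below
  the claimed bound; no peeling over the scale of \<open>||P - P*||\<close>, the source of the factor \<open>log\<^sub>2 n\<close>, is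
  needed.\<close>

section \<open>Edge sums and Hoeffding's inequality\<close>

definition upper_pairs :: "nat \<Rightarrow> (nat \<times> nat) set" where
  "upper_pairs n = {(i, j). i \<le> j \<and> j < n}"

definition edge_weight :: "(nat \<Rightarrow> nat \<Rightarrow> real) \<Rightarrow> nat \<times> nat \<Rightarrow> real" where
  "edge_weight D e =
     (if fst e = snd e then D (fst e) (fst e) else D (fst e) (snd e) + D (snd e) (fst e))"

lemma upper_pairs_Suc: "upper_pairs (Suc n) = upper_pairs n \<union> (\<lambda>i. (i, n)) ` {..n}"
  unfolding upper_pairs_def by auto

lemma finite_upper_pairs: "finite (upper_pairs n)"
  by (rule finite_subset[of _ "{..<n} \<times> {..<n}"]) (auto simp: upper_pairs_def)

lemma sum_symmetric_mult_eq_sum_upper_pairs: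
  fixes g D :: "nat \<Rightarrow> nat \<Rightarrow> real"
  assumes sym: "\<forall>i<n. \<forall>j<n. g i j = g j i"
  shows "(\<Sum>i<n. \<Sum>j<n. g i j * D i j) = (\<Sum>e\<in>upper_pairs n. g (fst e) (snd e) * edge_weight D e)"
proof -
  have "(\<Sum>i<m. \<Sum>j<m. g i j * D i j) = (\<Sum>e\<in>upper_pairs m. g (fst e) (snd e) * edge_weight D e)"
    if "m \<le> n" for m
    using that
  proof (induction m)
    case 0
    then show ?case by (simp add: upper_pairs_def)
  next
    case (Suc m)
    have disjoint: "upper_pairs m \<inter> (\<lambda>i. (i, m)) ` {..m} = {}"
      unfolding upper_pairs_def by auto
    have "(\<Sum>e\<in>upper_pairs (Suc m). g (fst e) (snd e) * edge_weight D e)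
       = (\<Sum>e\<in>upper_pairs m. g (fst e) (snd e) * edge_weight D e)
         + (\<Sum>e\<in>(\<lambda>i. (i, m)) ` {..m}. g (fst e) (snd e) * edge_weight D e)"
      unfolding upper_pairs_Suc
      by (rule sum.union_disjoint) (use disjoint finite_upper_pairs in auto)
    also have "(\<Sum>e\<in>(\<lambda>i. (i, m)) ` {..m}. g (fst e) (snd e) * edge_weight D e)
        = (\<Sum>i\<le>m. g i m * edge_weight D (i, m))"
      by (subst sum.reindex) (auto simp: inj_on_def)
    also have "\<dots> = (\<Sum>i<m. g i m * (D i m + D m i)) + g m m * D m m"
      by (simp add: lessThan_Suc_atMost[symmetric] edge_weight_def)
    also have "(\<Sum>i<m. g i m * (D i m + D m i)) = (\<Sum>i<m. g i m * D i m) + (\<Sum>j<m. g m j * D m j)"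
      using sym Suc.prems by (auto simp: sum.distrib algebra_simps intro!: sum.cong)
    finally show ?case
      using Suc by (simp add: sum.distrib)
  qed
  then show ?thesis by simp
qed

lemma frob_sq: "(frob n M)\<^sup>2 = (\<Sum>i<n. \<Sum>j<n. (M i j)\<^sup>2)"
  unfolding frob_def by (simp add: sum_nonneg)

lemma sum_edge_weight_sq_le: "(\<Sum>e\<in>upper_pairs n. (edge_weight D e)\<^sup>2) \<le> 2 * (frob n D)\<^sup>2"
proof -
  have "(frob n D)\<^sup>2 = (\<Sum>i<n. \<Sum>j<n. 1 * (D i j)\<^sup>2)"
    by (simp add: frob_sq)
  also have "\<dots> = (\<Sum>e\<in>upper_pairs n. edge_weight (\<lambda>i j. (D i j)\<^sup>2) e)"
    by (subst sum_symmetric_mult_eq_sum_upper_pairs) auto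
  finally have frob_eq: "(frob n D)\<^sup>2 = (\<Sum>e\<in>upper_pairs n. edge_weight (\<lambda>i j. (D i j)\<^sup>2) e)" .
  have "(a + b)\<^sup>2 \<le> 2 * (a\<^sup>2 + b\<^sup>2)" for a b :: real
    using zero_le_square[of "a - b"] by (simp add: power2_eq_square algebra_simps)
  then have "(edge_weight D e)\<^sup>2 \<le> 2 * edge_weight (\<lambda>i j. (D i j)\<^sup>2) e" for e
    unfolding edge_weight_def by auto
  then have "(\<Sum>e\<in>upper_pairs n. (edge_weight D e)\<^sup>2)
      \<le> (\<Sum>e\<in>upper_pairs n. 2 * edge_weight (\<lambda>i j. (D i j)\<^sup>2) e)"
    by (rule sum_mono)
  then show ?thesis
    by (simp add: frob_eq sum_distrib_left)
qed

lemma minner_adj_of_eq_edge_sum: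
  assumes sym: "\<forall>i<n. \<forall>j<n. Ps i j = Ps j i"
  shows "minner n (\<lambda>i j. adj_of n X i j - Ps i j) D
     = (\<Sum>e\<in>upper_pairs n. edge_weight D e * ((if X e then 1 else 0) - Ps (fst e) (snd e)))"
proof -
  have "minner n (\<lambda>i j. adj_of n X i j - Ps i j) D
     = (\<Sum>e\<in>upper_pairs n. (adj_of n X (fst e) (snd e) - Ps (fst e) (snd e)) * edge_weight D e)"
    unfolding minner_def
    by (rule sum_symmetric_mult_eq_sum_upper_pairs) (use sym in \<open>auto simp: adj_of_def\<close>)
  also have "\<dots> = (\<Sum>e\<in>upper_pairs n. edge_weight D e * ((if X e then 1 else 0) - Ps (fst e) (snd e)))"
    by (intro sum.cong) (auto simp: upper_pairs_def adj_of_def)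
  finally show ?thesis .
qed

lemma edge_pmf_component:
  assumes "e \<in> upper_pairs n"
  shows "map_pmf (\<lambda>X. X e) (edge_pmf n Ps) = bernoulli_pmf (Ps (fst e) (snd e))"
  using assms unfolding edge_pmf_def upper_pairs_def
  by (subst Pi_pmf_component) (auto simp: finite_upper_pairs[unfolded upper_pairs_def] split: prod.splits)

lemma prob_edge_sum_ge_le:
  fixes w :: "nat \<times> nat \<Rightarrow> real"
  assumes Ps01: "\<forall>i<n. \<forall>j<n. 0 \<le> Ps i j \<and> Ps i j \<le> 1"
    and t: "0 < t" and V: "(\<Sum>e\<in>upper_pairs n. (w e)\<^sup>2) \<le> V"
  shows "measure_pmf.prob (edge_pmf n Ps)
      {X. (\<Sum>e\<in>upper_pairs n. w e * Ps (fst e) (snd e)) + t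
          \<le> (\<Sum>e\<in>upper_pairs n. w e * (if X e then 1 else 0))}
    \<le> exp (- 2 * t\<^sup>2 / V)"
proof (cases "\<forall>e\<in>upper_pairs n. w e = 0")
  case True
  then show ?thesis using t by simp
next
  case False
  then have S2: "0 < (\<Sum>e\<in>upper_pairs n. (w e)\<^sup>2)"
    by (auto intro!: sum_pos2 finite_upper_pairs)
  have expectation: "measure_pmf.expectation (edge_pmf n Ps) (\<lambda>X. if X e then 1 else 0)
      = Ps (fst e) (snd e)" if e: "e \<in> upper_pairs n" for e
  proof -
    have "0 \<le> Ps (fst e) (snd e) \<and> Ps (fst e) (snd e) \<le> 1"
      using e Ps01 by (auto simp: upper_pairs_def)
    moreover have "measure_pmf.expectation (edge_pmf n Ps) (\<lambda>X. if X e then 1 else 0)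
        = measure_pmf.expectation (map_pmf (\<lambda>X. X e) (edge_pmf n Ps)) (\<lambda>b. if b then 1 else 0 :: real)"
      by simp
    ultimately show ?thesis
      using e by (simp add: edge_pmf_component)
  qed
  interpret Hoeffding_ineq "measure_pmf (edge_pmf n Ps)" "upper_pairs n"
      "\<lambda>e X. w e * (if X e then 1 else 0)" "\<lambda>e. min 0 (w e)" "\<lambda>e. max 0 (w e)"
      "\<Sum>e\<in>upper_pairs n. w e * Ps (fst e) (snd e)"
  proof unfold_locales
    show "prob_space.indep_vars (measure_pmf (edge_pmf n Ps)) (\<lambda>_. borel)
        (\<lambda>e X. w e * (if X e then 1 else 0)) (upper_pairs n)"
      unfolding edge_pmf_def upper_pairs_def
      by (intro prob_space.indep_vars_compose2[OF _ indep_vars_Pi_pmf])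
         (auto simp: measure_pmf.prob_space_axioms finite_upper_pairs[unfolded upper_pairs_def])
    show "(\<Sum>e\<in>upper_pairs n. w e * Ps (fst e) (snd e))
        \<equiv> (\<Sum>e\<in>upper_pairs n. measure_pmf.expectation (edge_pmf n Ps) (\<lambda>X. w e * (if X e then 1 else 0)))"
      by (intro eq_reflection sum.cong) (simp_all add: expectation)
  qed (auto simp: finite_upper_pairs)
  have range: "(\<Sum>e\<in>upper_pairs n. (max 0 (w e) - min 0 (w e))\<^sup>2) = (\<Sum>e\<in>upper_pairs n. (w e)\<^sup>2)"
    by (intro sum.cong) (auto simp: max_def min_def)
  have "measure_pmf.prob (edge_pmf n Ps)
      {X. (\<Sum>e\<in>upper_pairs n. w e * Ps (fst e) (snd e)) + t
          \<le> (\<Sum>e\<in>upper_pairs n. w e * (if X e then 1 else 0))}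
    \<le> exp (- 2 * t\<^sup>2 / (\<Sum>e\<in>upper_pairs n. (w e)\<^sup>2))"
    using Hoeffding_ineq_ge[of t] t S2 unfolding range by simp
  also have "\<dots> \<le> exp (- 2 * t\<^sup>2 / V)"
    using S2 V by (simp add: frac_le)
  finally show ?thesis .
qed

lemma prob_minner_ge_le:
  assumes Ps01: "\<forall>i<n. \<forall>j<n. 0 \<le> Ps i j \<and> Ps i j \<le> 1"
    and sym: "\<forall>i<n. \<forall>j<n. Ps i j = Ps j i"
    and t: "0 < t"
  shows "measure_pmf.prob (adj_pmf n Ps) {A. t \<le> minner n (\<lambda>i j. A i j - Ps i j) D}
    \<le> exp (- t\<^sup>2 / (frob n D)\<^sup>2)"
proof -
  have "measure_pmf.prob (adj_pmf n Ps) {A. t \<le> minner n (\<lambda>i j. A i j - Ps i j) D}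
      = measure_pmf.prob (edge_pmf n Ps)
          {X. (\<Sum>e\<in>upper_pairs n. edge_weight D e * Ps (fst e) (snd e)) + t
              \<le> (\<Sum>e\<in>upper_pairs n. edge_weight D e * (if X e then 1 else 0))}"
    unfolding adj_pmf_def measure_map_pmf
    by (intro arg_cong[where f = "measure_pmf.prob (edge_pmf n Ps)"] set_eqI)
       (auto simp: minner_adj_of_eq_edge_sum[OF sym] sum_subtractf right_diff_distrib)
  also have "\<dots> \<le> exp (- 2 * t\<^sup>2 / (2 * (frob n D)\<^sup>2))"
    by (rule prob_edge_sum_ge_le[OF Ps01 t sum_edge_weight_sq_le])
  finally show ?thesis by simp
qed

section \<open>A finite net for the nested block model\<close>

definition grid :: "nat \<Rightarrow> real set" where
  "grid m = (\<lambda>j. real j / real m) ` {..m}"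

definition grid_floor :: "nat \<Rightarrow> real \<Rightarrow> real" where
  "grid_floor m x = real (nat \<lfloor>x * real m\<rfloor>) / real m"

lemma finite_grid: "finite (grid m)"
  unfolding grid_def by simp

lemma card_grid_le: "card (grid m) \<le> m + 1"
  unfolding grid_def using card_image_le[of "{..m}" "\<lambda>j. real j / real m"] by simp

lemma grid_bounds: "y \<in> grid m \<Longrightarrow> 0 \<le> y \<and> y \<le> 1"
  unfolding grid_def by (auto simp: divide_le_eq)

lemma grid_floor_in_grid:
  assumes "0 \<le> x" "x \<le> 1"
  shows "grid_floor m x \<in> grid m"
proof -
  have "x * real m \<le> real m"
    using assms by (simp add: mult_left_le_one_le)
  then have "\<lfloor>x * real m\<rfloor> \<le> int m"
    by (metis floor_mono floor_of_nat)
  then show ?thesis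
    unfolding grid_floor_def grid_def by (intro imageI) auto
qed

lemma abs_sub_grid_floor_le:
  assumes "0 < m" "0 \<le> x"
  shows "\<bar>x - grid_floor m x\<bar> \<le> 1 / real m"
proof -
  have m: "0 < real m" using assms by simp
  have floor_eq: "grid_floor m x = of_int \<lfloor>x * real m\<rfloor> / real m"
    unfolding grid_floor_def using assms by simp
  have "of_int \<lfloor>x * real m\<rfloor> / real m \<le> x"
    using m by (simp add: divide_le_eq)
  moreover have "x - 1 / real m \<le> of_int \<lfloor>x * real m\<rfloor> / real m"
  proof -
    have "x - 1 / real m = (x * real m - 1) / real m"
      using m by (simp add: field_simps)
    also have "\<dots> \<le> of_int \<lfloor>x * real m\<rfloor> / real m"
      using m by (intro divide_right_mono) linarith+
    finally show ?thesis .
  qed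
  ultimately show ?thesis
    unfolding floor_eq by auto
qed

definition block_matrix ::
    "nat \<Rightarrow> (nat \<Rightarrow> nat) \<Rightarrow> (nat \<Rightarrow> nat) \<Rightarrow> (nat \<times> nat \<Rightarrow> real) \<Rightarrow> (nat \<times> nat \<Rightarrow> real)
      \<Rightarrow> nat \<Rightarrow> nat \<Rightarrow> real" where
  "block_matrix n z c \<beta> h =
     (\<lambda>i j. if i < n \<and> j < n then \<beta> (z i, z j) * h (i, c (z j)) * h (j, c (z i)) else 0)"

definition nbm_net :: "nat \<Rightarrow> nat \<Rightarrow> nat \<Rightarrow> nat \<Rightarrow> (nat \<Rightarrow> nat \<Rightarrow> real) set" where
  "nbm_net n K L m = (\<lambda>(z, c, \<beta>, h). block_matrix n z c \<beta> h) `
     (({..<n} \<rightarrow>\<^sub>E {..<K}) \<times> ({..<K} \<rightarrow>\<^sub>E {..<L}) \<times>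
      (({..<K} \<times> {..<K}) \<rightarrow>\<^sub>E grid m) \<times> (({..<n} \<times> {..<L}) \<rightarrow>\<^sub>E grid m))"

lemma finite_nbm_net: "finite (nbm_net n K L m)"
  unfolding nbm_net_def by (intro finite_imageI finite_cartesian_product finite_PiE finite_grid) auto

lemma card_nbm_net_le:
  "card (nbm_net n K L m) \<le> K ^ n * L ^ K * (m + 1) ^ (K * K + n * L)"
proof -
  have "card (nbm_net n K L m)
      \<le> card (({..<n} \<rightarrow>\<^sub>E {..<K}) \<times> ({..<K} \<rightarrow>\<^sub>E {..<L}) \<times>
          (({..<K} \<times> {..<K}) \<rightarrow>\<^sub>E grid m) \<times> (({..<n} \<times> {..<L}) \<rightarrow>\<^sub>E grid m))"
    unfolding nbm_net_def by (rule card_image_le) (intro finite_cartesian_product finite_PiE finite_grid; auto)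
  also have "\<dots> = K ^ n * L ^ K * card (grid m) ^ (K * K) * card (grid m) ^ (n * L)"
    by (simp add: card_cartesian_product card_PiE)
  also have "\<dots> \<le> K ^ n * L ^ K * (m + 1) ^ (K * K) * (m + 1) ^ (n * L)"
    using card_grid_le by (intro mult_mono power_mono) auto
  finally show ?thesis
    by (simp add: power_add)
qed

lemma nbm_net_bounds:
  assumes "Q \<in> nbm_net n K L m"
  shows "0 \<le> Q i j \<and> Q i j \<le> 1"
proof -
  obtain z c \<beta> h where Q: "Q = block_matrix n z c \<beta> h"
    and z: "z \<in> {..<n} \<rightarrow>\<^sub>E {..<K}" and c: "c \<in> {..<K} \<rightarrow>\<^sub>E {..<L}"
    and \<beta>: "\<beta> \<in> ({..<K} \<times> {..<K}) \<rightarrow>\<^sub>E grid m" and h: "h \<in> ({..<n} \<times> {..<L}) \<rightarrow>\<^sub>E grid m"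
    using assms unfolding nbm_net_def by auto
  show ?thesis
  proof (cases "i < n \<and> j < n")
    case True
    then have "z i < K" "z j < K"
      using z by auto
    then have "c (z i) < L" "c (z j) < L"
      using c by auto
    then have "\<beta> (z i, z j) \<in> grid m" "h (i, c (z j)) \<in> grid m" "h (j, c (z i)) \<in> grid m"
      using True \<open>z i < K\<close> \<open>z j < K\<close> \<beta> h by auto
    then show ?thesis
      unfolding Q block_matrix_def using True grid_bounds by (simp add: mult_le_one)
  next
    case False
    then show ?thesis by (auto simp: Q block_matrix_def)
  qed
qed

lemma abs_mult_sub_mult_le:
  fixes a b a' b' :: real
  assumes "\<bar>b\<bar> \<le> 1" "\<bar>a'\<bar> \<le> 1"
  shows "\<bar>a * b - a' * b'\<bar> \<le> \<bar>a - a'\<bar> + \<bar>b - b'\<bar>"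
proof -
  have "\<bar>a * b - a' * b'\<bar> = \<bar>(a - a') * b + a' * (b - b')\<bar>"
    by (simp add: algebra_simps)
  also have "\<dots> \<le> \<bar>a - a'\<bar> * \<bar>b\<bar> + \<bar>a'\<bar> * \<bar>b - b'\<bar>"
    by (rule order_trans[OF abs_triangle_ineq]) (simp add: abs_mult)
  also have "\<dots> \<le> \<bar>a - a'\<bar> * 1 + 1 * \<bar>b - b'\<bar>"
    using assms by (intro add_mono mult_mono) auto
  finally show ?thesis by simp
qed

lemma abs_mult3_sub_mult3_le:
  fixes a b c a' b' c' :: real
  assumes "\<bar>b\<bar> \<le> 1" "\<bar>c\<bar> \<le> 1" "\<bar>a'\<bar> \<le> 1" "\<bar>b'\<bar> \<le> 1"
  shows "\<bar>a * b * c - a' * b' * c'\<bar> \<le> \<bar>a - a'\<bar> + \<bar>b - b'\<bar> + \<bar>c - c'\<bar>"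
proof -
  have "\<bar>a' * b'\<bar> \<le> 1"
    using assms by (simp add: abs_mult mult_le_one)
  then have "\<bar>a * b * c - a' * b' * c'\<bar> \<le> \<bar>a * b - a' * b'\<bar> + \<bar>c - c'\<bar>"
    using assms by (intro abs_mult_sub_mult_le)
  moreover have "\<bar>a * b - a' * b'\<bar> \<le> \<bar>a - a'\<bar> + \<bar>b - b'\<bar>"
    using assms by (intro abs_mult_sub_mult_le)
  ultimately show ?thesis by linarith
qed

lemma obtain_blockwise_max_scaling:
  fixes H :: "nat \<Rightarrow> nat \<Rightarrow> real" and z :: "nat \<Rightarrow> nat"
  assumes H0: "\<forall>i<n. \<forall>l<L. 0 \<le> H i l"
  obtains M h where "\<forall>i<n. \<forall>l<L. H i l = M (z i) l * h (i, l) \<and> 0 \<le> h (i, l) \<and> h (i, l) \<le> 1"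
    and "\<forall>i<n. \<forall>l. \<exists>i'<n. z i' = z i \<and> H i' l = M (z i) l"
proof -
  define M where "M k l = Max ((\<lambda>i. H i l) ` {i. i < n \<and> z i = k})" for k l
  define h where "h e = (if M (z (fst e)) (snd e) = 0 then 0
      else H (fst e) (snd e) / M (z (fst e)) (snd e))" for e
  have H_le_M: "H i l \<le> M (z i) l" if "i < n" for i l
    unfolding M_def using that by (intro Max_ge) auto
  have attained: "\<exists>i'<n. z i' = z i \<and> H i' l = M (z i) l" if "i < n" for i l
  proof -
    have "M (z i) l \<in> (\<lambda>i. H i l) ` {i'. i' < n \<and> z i' = z i}"
      unfolding M_def using that by (intro Max_in) auto
    then show ?thesis by auto
  qed
  have scaling: "H i l = M (z i) l * h (i, l) \<and> 0 \<le> h (i, l) \<and> h (i, l) \<le> 1"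
    if "i < n" "l < L" for i l
  proof -
    have "0 \<le> H i l" "H i l \<le> M (z i) l"
      using H0 H_le_M that by auto
    then show ?thesis
      by (cases "M (z i) l = 0") (auto simp: h_def divide_le_eq)
  qed
  show ?thesis
    by (rule that[of M h]) (use scaling attained in blast)+
qed

text \<open>Dividing \<open>H\<close> by its maximum over each block
  and absorbing these maxima into \<open>B\<close> keeps the new block matrix in \<open>[0, 1]\<close>, because each of its
  entries reappears as an entry of \<open>P\<close>.\<close>

lemma NBM_unit_factorization:
  assumes "P \<in> NBM n K L"
  obtains z c \<beta> h where "\<forall>i<n. z i < K" "\<forall>k<K. c k < L"
    "\<forall>k<K. \<forall>k'<K. 0 \<le> \<beta> (k, k') \<and> \<beta> (k, k') \<le> 1"
    "\<forall>i<n. \<forall>l<L. 0 \<le> h (i, l) \<and> h (i, l) \<le> 1"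
    "\<forall>i<n. \<forall>j<n. P i j = \<beta> (z i, z j) * h (i, c (z j)) * h (j, c (z i))"
proof -
  obtain z c B H where P01: "\<forall>i<n. \<forall>j<n. 0 \<le> P i j \<and> P i j \<le> 1"
    and z: "\<forall>i<n. z i < K" and c: "\<forall>k<K. c k < L" and H0: "\<forall>i<n. \<forall>l<L. 0 \<le> H i l"
    and P: "\<forall>i<n. \<forall>j<n. P i j = B (z i) (z j) * H i (c (z j)) * H j (c (z i))"
    using assms unfolding NBM_def by (elim CollectE conjE exE) (rule that; assumption)
  obtain M h where scaling: "\<forall>i<n. \<forall>l<L. H i l = M (z i) l * h (i, l) \<and> 0 \<le> h (i, l) \<and> h (i, l) \<le> 1"
    and attained: "\<forall>i<n. \<forall>l. \<exists>i'<n. z i' = z i \<and> H i' l = M (z i) l"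
    using obtain_blockwise_max_scaling[OF H0, where z = z] by blast
  define \<beta> where "\<beta> e = (if (\<exists>i<n. z i = fst e) \<and> (\<exists>j<n. z j = snd e)
      then B (fst e) (snd e) * M (fst e) (c (snd e)) * M (snd e) (c (fst e)) else 0)" for e
  have P_eq: "P i j = \<beta> (z i, z j) * h (i, c (z j)) * h (j, c (z i))" if "i < n" "j < n" for i j
  proof -
    have "c (z j) < L" "c (z i) < L"
      using c z that by auto
    then have "P i j = B (z i) (z j) * (M (z i) (c (z j)) * h (i, c (z j)))
        * (M (z j) (c (z i)) * h (j, c (z i)))"
      using P scaling that by simp
    also have "\<dots> = \<beta> (z i, z j) * h (i, c (z j)) * h (j, c (z i))"
      unfolding \<beta>_def using that by (auto simp: algebra_simps)
    finally show ?thesis .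
  qed
  have \<beta>_unit: "0 \<le> \<beta> (k, k') \<and> \<beta> (k, k') \<le> 1" for k k'
  proof (cases "(\<exists>i<n. z i = k) \<and> (\<exists>j<n. z j = k')")
    case True
    then obtain i j where ij: "i < n" "z i = k" "j < n" "z j = k'"
      by blast
    obtain i' where i': "i' < n" "z i' = k" "H i' (c k') = M k (c k')"
      using attained[rule_format, OF \<open>i < n\<close>, of "c k'"] ij by auto
    obtain j' where j': "j' < n" "z j' = k'" "H j' (c k) = M k' (c k)"
      using attained[rule_format, OF \<open>j < n\<close>, of "c k"] ij by auto
    have "P i' j' = \<beta> (k, k')"
      using P i' j' True unfolding \<beta>_def by auto
    moreover have "0 \<le> P i' j' \<and> P i' j' \<le> 1"
      using P01 i'(1) j'(1) by blast
    ultimately show ?thesis by simp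
  next
    case False
    then show ?thesis by (auto simp: \<beta>_def)
  qed
  show ?thesis
    by (rule that[of z c \<beta> h]) (use z c scaling P_eq \<beta>_unit in auto)
qed

lemma NBM_near_nbm_net:
  assumes "P \<in> NBM n K L" "0 < m"
  obtains Q where "Q \<in> nbm_net n K L m" "\<forall>i<n. \<forall>j<n. \<bar>P i j - Q i j\<bar> \<le> 3 / real m"
proof -
  obtain z c \<beta> h where z: "\<forall>i<n. z i < K" and c: "\<forall>k<K. c k < L"
    and \<beta>: "\<forall>k<K. \<forall>k'<K. 0 \<le> \<beta> (k, k') \<and> \<beta> (k, k') \<le> 1"
    and h: "\<forall>i<n. \<forall>l<L. 0 \<le> h (i, l) \<and> h (i, l) \<le> 1"
    and P: "\<forall>i<n. \<forall>j<n. P i j = \<beta> (z i, z j) * h (i, c (z j)) * h (j, c (z i))"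
    using NBM_unit_factorization[OF assms(1)] by blast
  define Q where "Q = block_matrix n (restrict z {..<n}) (restrict c {..<K})
      (restrict (grid_floor m \<circ> \<beta>) ({..<K} \<times> {..<K})) (restrict (grid_floor m \<circ> h) ({..<n} \<times> {..<L}))"
  have "Q \<in> nbm_net n K L m"
    unfolding nbm_net_def Q_def using z c \<beta> h
    by (intro image_eqI[where x = "(restrict z {..<n}, restrict c {..<K},
        restrict (grid_floor m \<circ> \<beta>) ({..<K} \<times> {..<K}), restrict (grid_floor m \<circ> h) ({..<n} \<times> {..<L}))"])
       (auto intro!: grid_floor_in_grid)
  moreover have "\<bar>P i j - Q i j\<bar> \<le> 3 / real m" if ij: "i < n" "j < n" for i j
  proof -
    let ?b = "\<beta> (z i, z j)" and ?h1 = "h (i, c (z j))" and ?h2 = "h (j, c (z i))"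
    have zc: "z i < K" "z j < K" "c (z i) < L" "c (z j) < L"
      using z c ij by auto
    have unit: "0 \<le> x \<and> x \<le> 1 \<and> 0 \<le> grid_floor m x \<and> grid_floor m x \<le> 1"
      if "x \<in> {?b, ?h1, ?h2}" for x
      using that \<beta> h ij zc grid_bounds[OF grid_floor_in_grid] by auto
    have "Q i j = grid_floor m ?b * grid_floor m ?h1 * grid_floor m ?h2"
      unfolding Q_def block_matrix_def using ij zc by simp
    then have "\<bar>P i j - Q i j\<bar> \<le> \<bar>?b - grid_floor m ?b\<bar> + \<bar>?h1 - grid_floor m ?h1\<bar>
        + \<bar>?h2 - grid_floor m ?h2\<bar>"
      using P ij unit by (auto intro!: abs_mult3_sub_mult3_le)
    also have "\<dots> \<le> 1 / real m + 1 / real m + 1 / real m"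
      using assms(2) unit by (intro add_mono abs_sub_grid_floor_le) auto
    finally show ?thesis by simp
  qed
  ultimately show ?thesis
    using that by blast
qed

section \<open>Size of the net\<close>

lemma two_le_ln_18: "2 \<le> ln (18 :: real)"
proof -
  have "exp (2 :: real) = exp 1 * exp 1"
    by (simp flip: exp_add)
  also have "\<dots> \<le> 3 * 3"
    using exp_le by (intro mult_mono) auto
  finally show ?thesis
    by (simp add: ln_ge_iff)
qed

lemma four_n_le_tau:
  assumes "1 \<le> L" "1 \<le> K" "2 \<le> n"
  shows "4 * real n \<le> tau n K L"
proof -
  have "2 \<le> real n * real L"
    using assms mult_mono[of 2 "real n" 1 "real L"] by simp
  then have "18 \<le> 9 * real n * real L"
    by (subst mult.assoc) linarith
  then have "ln 18 \<le> ln (9 * real n * real L)"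
    by (rule ln_mono) simp
  then have ln_ge: "2 \<le> ln (9 * real n * real L)"
    using two_le_ln_18 by linarith
  have "2 * real n \<le> real K ^ 2 + 2 * real n * real L"
    using assms mult_left_mono[of 1 "real L" "real n"] by (simp add: add_increasing)
  then have "2 * real n * 2 \<le> (real K ^ 2 + 2 * real n * real L) * ln (9 * real n * real L)"
    using ln_ge by (intro mult_mono) auto
  moreover have "0 \<le> real n * ln (real K)" "0 \<le> real K * ln (real L)"
    using assms by auto
  ultimately show ?thesis
    unfolding tau_def by linarith
qed

lemma card_nbm_net_le_exp_tau:
  assumes "1 \<le> L" "1 \<le> K" "1 \<le> n"
  shows "real (card (nbm_net n K L (n * n))) \<le> exp (2 * tau n K L)"
proof -
  define q where "q = 9 * real n * real L"
  have q: "1 \<le> q"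
    unfolding q_def using assms mult_mono[of 1 "real n" 1 "real L"] by simp
  have pos: "0 < real K" "0 < real L" "0 < q"
    using assms q by auto
  have "real (n * n + 1) \<le> q\<^sup>2"
  proof -
    have "real n * real n + 1 \<le> 81 * (real n * real n) * 1"
      using assms mult_mono[of 1 "real n" 1 "real n"] by simp
    also have "\<dots> \<le> 81 * (real n * real n) * (real L * real L)"
      using assms mult_mono[of 1 "real L" 1 "real L"] by (intro mult_left_mono) auto
    finally show ?thesis
      by (simp add: q_def power2_eq_square algebra_simps)
  qed
  have "real (card (nbm_net n K L (n * n)))
      \<le> real (K ^ n * L ^ K * (n * n + 1) ^ (K * K + n * L))"
    using card_nbm_net_le by (simp only: of_nat_le_iff)
  also have "\<dots> = real K ^ n * real L ^ K * real (n * n + 1) ^ (K * K + n * L)"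
    by (simp only: of_nat_mult of_nat_power)
  also have "\<dots> \<le> real K ^ n * real L ^ K * (q\<^sup>2) ^ (K * K + n * L)"
    using \<open>real (n * n + 1) \<le> q\<^sup>2\<close> by (intro mult_left_mono power_mono) auto
  also have "\<dots> = real K ^ n * real L ^ K * q ^ (2 * (K * K + n * L))"
    by (simp only: power_mult)
  also have "\<dots> = exp (real n * ln (real K) + real K * ln (real L)
      + real (2 * (K * K + n * L)) * ln q)"
    by (simp only: exp_add exp_of_nat_mult exp_ln pos)
  also have "\<dots> \<le> exp (2 * tau n K L)"
  proof -
    have "real (2 * (K * K + n * L)) \<le> 2 * (real K ^ 2 + 2 * real n * real L)"
      by (simp add: power2_eq_square)
    then have "real (2 * (K * K + n * L)) * ln q \<le> 2 * ((real K ^ 2 + 2 * real n * real L) * ln q)"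
      unfolding mult.assoc[symmetric] using q by (intro mult_right_mono) auto
    moreover have "0 \<le> real n * ln (real K)" "0 \<le> real K * ln (real L)"
      using assms by auto
    ultimately show ?thesis
      unfolding tau_def q_def[symmetric] distrib_left by (subst exp_le_cancel_iff) linarith
  qed
  finally show ?thesis .
qed

section \<open>The deviation bound\<close>

lemma abs_double_sum_diff_le:
  fixes f g :: "nat \<Rightarrow> nat \<Rightarrow> real"
  assumes "\<forall>i<n. \<forall>j<n. \<bar>f i j - g i j\<bar> \<le> e"
  shows "\<bar>(\<Sum>i<n. \<Sum>j<n. f i j) - (\<Sum>i<n. \<Sum>j<n. g i j)\<bar> \<le> real n * real n * e"
proof -
  have "\<bar>(\<Sum>i<n. \<Sum>j<n. f i j) - (\<Sum>i<n. \<Sum>j<n. g i j)\<bar> = \<bar>\<Sum>i<n. \<Sum>j<n. f i j - g i j\<bar>"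
    by (simp add: sum_subtractf)
  also have "\<dots> \<le> (\<Sum>i<n. \<Sum>j<n. \<bar>f i j - g i j\<bar>)"
    by (rule order_trans[OF sum_abs sum_mono[OF sum_abs]])
  also have "\<dots> \<le> (\<Sum>i<n. \<Sum>j<n. e)"
    using assms by (intro sum_mono) auto
  finally show ?thesis by simp
qed

lemma minner_frob_perturbation:
  fixes X D D' :: "nat \<Rightarrow> nat \<Rightarrow> real"
  assumes bounded: "\<forall>i<n. \<forall>j<n. \<bar>X i j\<bar> \<le> 1 \<and> \<bar>D i j\<bar> \<le> 1 \<and> \<bar>D' i j\<bar> \<le> 1"
    and close: "\<forall>i<n. \<forall>j<n. \<bar>D i j - D' i j\<bar> \<le> \<delta>"
  shows "\<bar>minner n X D - minner n X D'\<bar> \<le> real n * real n * \<delta>"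
    and "\<bar>(frob n D)\<^sup>2 - (frob n D')\<^sup>2\<bar> \<le> real n * real n * (2 * \<delta>)"
proof -
  have "\<bar>X i j * D i j - X i j * D' i j\<bar> \<le> \<delta>" if "i < n" "j < n" for i j
  proof -
    have "\<bar>X i j * D i j - X i j * D' i j\<bar> = \<bar>X i j\<bar> * \<bar>D i j - D' i j\<bar>"
      by (simp add: abs_mult right_diff_distrib[symmetric])
    also have "\<dots> \<le> 1 * \<delta>"
      using bounded close that by (intro mult_mono) auto
    finally show ?thesis by simp
  qed
  then show "\<bar>minner n X D - minner n X D'\<bar> \<le> real n * real n * \<delta>"
    unfolding minner_def by (intro abs_double_sum_diff_le) auto
  have "\<bar>(D i j)\<^sup>2 - (D' i j)\<^sup>2\<bar> \<le> 2 * \<delta>" if "i < n" "j < n" for i j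
  proof -
    have "\<bar>(D i j)\<^sup>2 - (D' i j)\<^sup>2\<bar> = \<bar>D i j - D' i j\<bar> * \<bar>D i j + D' i j\<bar>"
      by (simp add: power2_eq_square algebra_simps flip: abs_mult)
    also have "\<dots> \<le> \<delta> * 2"
    proof (rule mult_mono)
      have "\<bar>D i j\<bar> \<le> 1" "\<bar>D' i j\<bar> \<le> 1"
        using bounded that by auto
      then show "\<bar>D i j + D' i j\<bar> \<le> 2"
        using abs_triangle_ineq[of "D i j" "D' i j"] by linarith
      show "\<bar>D i j - D' i j\<bar> \<le> \<delta>"
        using close that by auto
      then show "0 \<le> \<delta>" by (rule order_trans[OF abs_ge_zero])
    qed simp
    finally show ?thesis by simp
  qed
  then show "\<bar>(frob n D)\<^sup>2 - (frob n D')\<^sup>2\<bar> \<le> real n * real n * (2 * \<delta>)"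
    unfolding frob_sq by (intro abs_double_sum_diff_le) auto
qed

lemma adj_pmf_entries:
  assumes "A \<in> set_pmf (adj_pmf n Ps)"
  shows "A i j = 0 \<or> A i j = 1"
  using assms unfolding adj_pmf_def adj_of_def by auto

lemma NBM_bounds:
  assumes "P \<in> NBM n K L" "i < n" "j < n"
  shows "0 \<le> P i j \<and> P i j \<le> 1"
  using assms(1)[unfolded NBM_def, THEN CollectD, THEN conjunct1] assms(2,3) by blast

text \<open>A near-maximiser \<open>P\<close> has excess above \<open>-1\<close>; passing to its net point \<open>Q\<close> costs at most \<open>3\<close>
  in the inner product and \<open>6\<close> in the squared norm, whence the constants \<open>5\<close> and \<open>6\<close>.\<close>

lemma sup_excess_nonneg_obtain_net_point:
  fixes R Dl :: real
  assumes n: "0 < n"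
    and A: "A \<in> set_pmf (adj_pmf n Ps)"
    and Ps01: "\<forall>i<n. \<forall>j<n. 0 \<le> Ps i j \<and> Ps i j \<le> 1"
    and R: "0 \<le> R"
    and sup: "0 \<le> (SUP P\<in>{P \<in> NBM n K L. R \<le> frob n (\<lambda>i j. P i j - Ps i j)}.
        ereal (2 * minner n (\<lambda>i j. A i j - Ps i j) (\<lambda>i j. P i j - Ps i j)
          - (1/2) * (frob n (\<lambda>i j. P i j - Ps i j))\<^sup>2 - 2 * Dl))"
  obtains Q where "Q \<in> nbm_net n K L (n * n)"
    and "R\<^sup>2 - 6 \<le> (frob n (\<lambda>i j. Q i j - Ps i j))\<^sup>2"
    and "(frob n (\<lambda>i j. Q i j - Ps i j))\<^sup>2 / 4 + Dl - 5
      \<le> minner n (\<lambda>i j. A i j - Ps i j) (\<lambda>i j. Q i j - Ps i j)"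
proof -
  have "ereal (-1) < (SUP P\<in>{P \<in> NBM n K L. R \<le> frob n (\<lambda>i j. P i j - Ps i j)}.
        ereal (2 * minner n (\<lambda>i j. A i j - Ps i j) (\<lambda>i j. P i j - Ps i j)
          - (1/2) * (frob n (\<lambda>i j. P i j - Ps i j))\<^sup>2 - 2 * Dl))"
    using sup by (rule less_le_trans[rotated]) simp
  then obtain P where P: "P \<in> NBM n K L" and R_le: "R \<le> frob n (\<lambda>i j. P i j - Ps i j)"
    and excess: "-1 < 2 * minner n (\<lambda>i j. A i j - Ps i j) (\<lambda>i j. P i j - Ps i j)
          - (1/2) * (frob n (\<lambda>i j. P i j - Ps i j))\<^sup>2 - 2 * Dl"
    by (auto simp: less_SUP_iff)
  obtain Q where Q: "Q \<in> nbm_net n K L (n * n)"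
    and PQ: "\<forall>i<n. \<forall>j<n. \<bar>P i j - Q i j\<bar> \<le> 3 / real (n * n)"
    using NBM_near_nbm_net[OF P] n by (metis nat_0_less_mult_iff)
  have "\<bar>A i j - Ps i j\<bar> \<le> 1 \<and> \<bar>P i j - Ps i j\<bar> \<le> 1 \<and> \<bar>Q i j - Ps i j\<bar> \<le> 1"
    if "i < n" "j < n" for i j
  proof -
    have "0 \<le> Ps i j" "Ps i j \<le> 1"
      using Ps01 that by auto
    then show ?thesis
      using adj_pmf_entries[OF A, of i j] NBM_bounds[OF P that] nbm_net_bounds[OF Q, of i j]
      by (auto simp: abs_le_iff)
  qed
  then have bounded: "\<forall>i<n. \<forall>j<n. \<bar>A i j - Ps i j\<bar> \<le> 1 \<and> \<bar>P i j - Ps i j\<bar> \<le> 1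
      \<and> \<bar>Q i j - Ps i j\<bar> \<le> 1"
    by blast
  have close: "\<forall>i<n. \<forall>j<n. \<bar>(P i j - Ps i j) - (Q i j - Ps i j)\<bar> \<le> 3 / (real n * real n)"
    using PQ by simp
  have "real n * real n * (3 / (real n * real n)) = 3"
    and "real n * real n * (2 * (3 / (real n * real n))) = 6"
    using n by simp_all
  then have "\<bar>minner n (\<lambda>i j. A i j - Ps i j) (\<lambda>i j. P i j - Ps i j)
        - minner n (\<lambda>i j. A i j - Ps i j) (\<lambda>i j. Q i j - Ps i j)\<bar> \<le> 3"
    and "\<bar>(frob n (\<lambda>i j. P i j - Ps i j))\<^sup>2 - (frob n (\<lambda>i j. Q i j - Ps i j))\<^sup>2\<bar> \<le> 6"
    using minner_frob_perturbation[OF bounded close] by simp_all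
  moreover have "R\<^sup>2 \<le> (frob n (\<lambda>i j. P i j - Ps i j))\<^sup>2"
    using R R_le by (intro power_mono) auto
  ultimately have "R\<^sup>2 - 6 \<le> (frob n (\<lambda>i j. Q i j - Ps i j))\<^sup>2"
    and "(frob n (\<lambda>i j. Q i j - Ps i j))\<^sup>2 / 4 + Dl - 5
      \<le> minner n (\<lambda>i j. A i j - Ps i j) (\<lambda>i j. Q i j - Ps i j)"
    using excess by linarith+
  with Q show ?thesis
    by (rule that)
qed

lemma prob_minner_ge_frob_sq_le:
  assumes Ps01: "\<forall>i<n. \<forall>j<n. 0 \<le> Ps i j \<and> Ps i j \<le> 1"
    and sym: "\<forall>i<n. \<forall>j<n. Ps i j = Ps j i"
    and r: "0 < r" "r \<le> (frob n D)\<^sup>2" and b: "0 \<le> b"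
  shows "measure_pmf.prob (adj_pmf n Ps)
      {A. (frob n D)\<^sup>2 / 4 + b \<le> minner n (\<lambda>i j. A i j - Ps i j) D} \<le> exp (- r / 16 - b / 2)"
proof -
  define f where "f = (frob n D)\<^sup>2"
  have f: "0 < f" "r \<le> f"
    using r unfolding f_def by auto
  have "0 < f / 4 + b"
    using f b by simp
  then have "measure_pmf.prob (adj_pmf n Ps) {A. f / 4 + b \<le> minner n (\<lambda>i j. A i j - Ps i j) D}
      \<le> exp (- (f / 4 + b)\<^sup>2 / f)"
    unfolding f_def by (rule prob_minner_ge_le[OF Ps01 sym])
  also have "\<dots> \<le> exp (- r / 16 - b / 2)"
  proof -
    have "- (f / 4 + b)\<^sup>2 / f = - f / 16 - b / 2 - b\<^sup>2 / f"
      using f by (simp add: power2_eq_square field_simps)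
    moreover have "0 \<le> b\<^sup>2 / f"
      using f by simp
    ultimately show ?thesis
      using f by (subst exp_le_cancel_iff) linarith
  qed
  finally show ?thesis
    unfolding f_def .
qed

lemma card_nbm_net_mult_exp_Delta_le_1:
  assumes "1 \<le> L" "L \<le> K" "2 \<le> n"
  shows "real (card (nbm_net n K L (n * n))) * exp (- (Delta n K L - 5) / 2) \<le> 1"
proof -
  have "4 * real n \<le> tau n K L"
    using assms by (intro four_n_le_tau) auto
  then have Delta: "8 * tau n K L \<le> Delta n K L - 5"
    using assms unfolding Delta_def C0sq_def by simp
  have "real (card (nbm_net n K L (n * n))) \<le> exp (2 * tau n K L)"
    using card_nbm_net_le_exp_tau assms by simp
  also have "\<dots> \<le> exp ((Delta n K L - 5) / 2)"
    using Delta \<open>4 * real n \<le> tau n K L\<close> by simp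
  finally have "real (card (nbm_net n K L (n * n))) * exp (- (Delta n K L - 5) / 2)
      \<le> exp ((Delta n K L - 5) / 2) * exp (- (Delta n K L - 5) / 2)"
    by (rule mult_right_mono) simp
  also have "\<dots> = 1"
    by (simp flip: exp_add add: field_simps)
  finally show ?thesis .
qed

lemma prob_sup_excess_nonneg_le:
  fixes R :: real
  assumes n: "2 \<le> n" and L: "1 \<le> L" "L \<le> K" and R: "0 \<le> R" "6 < R\<^sup>2"
    and Ps01: "\<forall>i<n. \<forall>j<n. 0 \<le> Ps i j \<and> Ps i j \<le> 1"
    and sym: "\<forall>i<n. \<forall>j<n. Ps i j = Ps j i"
  shows "measure_pmf.prob (adj_pmf n Ps)
      {A. 0 \<le> (SUP P\<in>{P \<in> NBM n K L. R \<le> frob n (\<lambda>i j. P i j - Ps i j)}.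
             ereal (2 * minner n (\<lambda>i j. A i j - Ps i j) (\<lambda>i j. P i j - Ps i j)
                    - (1/2) * (frob n (\<lambda>i j. P i j - Ps i j))\<^sup>2 - 2 * Delta n K L))}
    \<le> exp (- (R\<^sup>2 - 6) / 16)"
  (is "measure_pmf.prob ?p ?E \<le> _")
proof -
  define net where "net = {Q \<in> nbm_net n K L (n * n). R\<^sup>2 - 6 \<le> (frob n (\<lambda>i j. Q i j - Ps i j))\<^sup>2}"
  define event where "event Q = {A. (frob n (\<lambda>i j. Q i j - Ps i j))\<^sup>2 / 4 + (Delta n K L - 5)
      \<le> minner n (\<lambda>i j. A i j - Ps i j) (\<lambda>i j. Q i j - Ps i j)}" for Q
  have n0: "0 < n"
    using n by simp
  have Delta: "0 \<le> Delta n K L - 5"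
    using four_n_le_tau[of L K n] L n unfolding Delta_def C0sq_def by simp
  have "?E \<inter> set_pmf ?p \<subseteq> (\<Union>Q\<in>net. event Q)"
  proof
    fix A assume A: "A \<in> ?E \<inter> set_pmf ?p"
    obtain Q where "Q \<in> nbm_net n K L (n * n)"
      and "R\<^sup>2 - 6 \<le> (frob n (\<lambda>i j. Q i j - Ps i j))\<^sup>2"
      and "(frob n (\<lambda>i j. Q i j - Ps i j))\<^sup>2 / 4 + Delta n K L - 5
        \<le> minner n (\<lambda>i j. A i j - Ps i j) (\<lambda>i j. Q i j - Ps i j)"
      by (rule sup_excess_nonneg_obtain_net_point[OF n0 A[THEN IntD2] Ps01 R(1) A[THEN IntD1, THEN CollectD]])
    then show "A \<in> (\<Union>Q\<in>net. event Q)"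
      unfolding net_def event_def by auto
  qed
  then have "measure_pmf.prob ?p ?E \<le> measure_pmf.prob ?p (\<Union>Q\<in>net. event Q)"
    by (subst measure_Int_set_pmf[symmetric]) (rule measure_pmf.finite_measure_mono; simp)
  also have "\<dots> \<le> (\<Sum>Q\<in>net. measure_pmf.prob ?p (event Q))"
    unfolding net_def by (intro measure_pmf.finite_measure_subadditive_finite) (simp_all add: finite_nbm_net)
  also have "\<dots> \<le> (\<Sum>Q\<in>net. exp (- (R\<^sup>2 - 6) / 16 - (Delta n K L - 5) / 2))"
    unfolding event_def net_def using R Delta
    by (intro sum_mono prob_minner_ge_frob_sq_le[OF Ps01 sym]) auto
  also have "\<dots> = real (card net) * exp (- (Delta n K L - 5) / 2) * exp (- (R\<^sup>2 - 6) / 16)"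
    by (simp flip: exp_add add: field_simps)
  also have "\<dots> \<le> real (card (nbm_net n K L (n * n))) * exp (- (Delta n K L - 5) / 2)
      * exp (- (R\<^sup>2 - 6) / 16)"
    by (intro mult_right_mono) (auto simp: net_def intro!: card_mono finite_nbm_net)
  also have "\<dots> \<le> exp (- (R\<^sup>2 - 6) / 16)"
    using card_nbm_net_mult_exp_Delta_le_1[OF L n] mult_right_mono[of _ 1 "exp (- (R\<^sup>2 - 6) / 16)"]
    by simp
  finally show ?thesis .
qed

lemma radius_bounds:
  fixes s0 :: real
  assumes "2 \<le> n" "1 \<le> L0" "L0 \<le> K0" "0 \<le> s0"
  defines "R \<equiv> sqrt C0sq * 2 powr s0 * sqrt (tau n K0 L0)"
  shows "0 \<le> R" and "6 < R\<^sup>2" and "real n * 2 powr (2 * s0 - 7) \<le> (R\<^sup>2 - 6) / 16"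
proof -
  define x where "x = 2 powr (2 * s0)"
  have tau: "4 * real n \<le> tau n K0 L0"
    using assms by (intro four_n_le_tau) auto
  have x: "1 \<le> x"
    unfolding x_def using assms(4) by (intro ge_one_powr_ge_zero) auto
  have R_sq: "R\<^sup>2 = 3009 * (x * tau n K0 L0)"
    unfolding R_def x_def C0sq_def using tau by (simp add: power_mult_distrib powr_power)
  have "4 * (x * real n) \<le> x * tau n K0 L0"
    using mult_left_mono[OF tau, of x] x by (simp add: mult.left_commute)
  moreover have "2 \<le> x * real n"
    using mult_mono[of 1 x 2 "real n"] x assms(1) by simp
  moreover have "real n * 2 powr (2 * s0 - 7) = x * real n / 128"
    unfolding x_def by (simp add: powr_diff)
  ultimately show "6 < R\<^sup>2" and "real n * 2 powr (2 * s0 - 7) \<le> (R\<^sup>2 - 6) / 16"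
    unfolding R_sq diff_divide_distrib by linarith+
  show "0 \<le> R"
    unfolding R_def C0sq_def using tau by simp
qed

theorem lemma4:
  fixes n K L K0 L0 :: nat and s0 :: real and Ps :: "nat \<Rightarrow> nat \<Rightarrow> real"
  assumes "n \<ge> 2"
    and "1 \<le> L0" "L0 \<le> K0" "K0 \<le> n"
    and "1 \<le> L" "L \<le> K" "K \<le> n"
    and "s0 > 0"
    and "\<forall>i<n. \<forall>j<n. 0 \<le> Ps i j \<and> Ps i j \<le> 1"
    and "\<forall>i<n. \<forall>j<n. Ps i j = Ps j i"
  shows "measure_pmf.prob (adj_pmf n Ps)
      {A. (SUP P\<in>{P \<in> NBM n K L.
                 frob n (\<lambda>i j. P i j - Ps i j) \<ge> sqrt C0sq * 2 powr s0 * sqrt (tau n K0 L0)}.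
             ereal (2 * minner n (\<lambda>i j. A i j - Ps i j) (\<lambda>i j. P i j - Ps i j)
                    - (1/2) * (frob n (\<lambda>i j. P i j - Ps i j))\<^sup>2 - 2 * Delta n K L)) \<ge> 0}
    \<le> log 2 (real n) * exp (- real n * 2 powr (2 * s0 - 7))"
  (is "?prob \<le> _")
proof -
  note R = radius_bounds[OF assms(1,2,3) less_imp_le[OF assms(8)]]
  have "?prob \<le> exp (- ((sqrt C0sq * 2 powr s0 * sqrt (tau n K0 L0))\<^sup>2 - 6) / 16)"
    by (rule prob_sup_excess_nonneg_le[OF assms(1,5,6) R(1,2) assms(9,10)])
  also have "\<dots> \<le> exp (- real n * 2 powr (2 * s0 - 7))"
    using R(3) by simp
  also have "\<dots> \<le> log 2 (real n) * exp (- real n * 2 powr (2 * s0 - 7))"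
    using assms(1) mult_right_mono[of 1 "log 2 (real n)" "exp (- real n * 2 powr (2 * s0 - 7))"]
    by simp
  finally show ?thesis .
qed

end
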